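(* Let $A$ be a real symmetric nonsingular $n\times n$ matrix and let $L$ be a linear subspace of $\mathbb R^n$ with orthogonal complement $L^*$. Suppose $A$ is positive definite on $L$ (i.e. $\mathbf x^TA\mathbf x>0$ for all nonzero $\mathbf x\in L$) and $A^{-1}$ is positive definite on $L^*$ (i.e. $\mathbf y^TA^{-1}\mathbf y>0$ for all nonzero $\mathbf y\in L^*$). Then $A$ is positive definite. *)

theory Defs
  imports "HOL-Analysis.Analysis"
begin

definition pos_def_on :: "real^'n^'n \<Rightarrow> (real^'n) set \<Rightarrow> bool" where
  "pos_def_on A S \<longleftrightarrow> (\<forall>x\<in>S. x \<noteq> 0 \<longrightarrow> x \<bullet> (A *v x) > 0)"

definition pos_def :: "real^'n^'n \<Rightarrow> bool" where
  "pos_def A \<longleftrightarrow> pos_def_on A UNIV"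

end

theory Submission
  imports Defs
begin

text \<open>Write \<open>B = A\<^sup>-\<^sup>1\<close> and \<open>L\<^sup>\<bottom>\<close> for the orthogonal complement. For \<open>l \<in> L\<close> and
  \<open>m \<in> L\<^sup>\<bottom>\<close> the cross terms vanish by symmetry of \<open>A\<close>, so
  \<open>(l + B m)\<^sup>T A (l + B m) = l\<^sup>T A l + m\<^sup>T B m\<close>.
  This form is positive unless \<open>l = m = 0\<close>; in particular \<open>L \<inter> B L\<^sup>\<bottom> = {0}\<close>, and since
  \<open>dim L + dim (B L\<^sup>\<bottom>) = n\<close>, every vector has the form \<open>l + B m\<close>.\<close>

lemma matrix_inv_right:
  fixes A :: "'a::semiring_1^'n^'n"
  assumes "invertible A"
  shows "A ** matrix_inv A = mat 1"
  using assms unfolding invertible_def matrix_inv_def by (rule someI2_ex) blast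

lemma symmetric_matrix_inner_commute:
  fixes A :: "real^'n^'n"
  assumes "transpose A = A"
  shows "x \<bullet> (A *v y) = (A *v x) \<bullet> y"
  by (metis assms dot_lmul_matrix inner_commute transpose_transpose vector_transpose_matrix)

lemma pos_def_on_nonneg:
  assumes "pos_def_on A S" "x \<in> S"
  shows "0 \<le> x \<bullet> (A *v x)"
  using assms unfolding pos_def_on_def by (cases "x = 0") force+

lemma pos_def_on_add_pos:
  assumes "pos_def_on A S" "pos_def_on B T" "x \<in> S" "y \<in> T" "x \<noteq> 0 \<or> y \<noteq> 0"
  shows "0 < x \<bullet> (A *v x) + y \<bullet> (B *v y)"
  using assms pos_def_on_nonneg[OF assms(1,3)] pos_def_on_nonneg[OF assms(2,4)]
  unfolding pos_def_on_def by (meson add_pos_nonneg add_nonneg_pos)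

lemma quadratic_form_add_right_inverse:
  fixes A B :: "real^'n^'n"
  assumes "transpose A = A" "A ** B = mat 1" "orthogonal x y"
  shows "(x + B *v y) \<bullet> (A *v (x + B *v y)) = x \<bullet> (A *v x) + y \<bullet> (B *v y)"
proof -
  have ABy: "A *v (B *v y) = y"
    by (simp add: assms(2) matrix_vector_mul_assoc)
  have "(B *v y) \<bullet> (A *v x) = x \<bullet> y"
    using symmetric_matrix_inner_commute[OF assms(1), of "B *v y" x] by (simp add: ABy inner_commute)
  then show ?thesis
    using assms(3) unfolding orthogonal_def
    by (simp add: matrix_vector_right_distrib ABy inner_add_left inner_add_right inner_commute)
qed

lemma dim_add_dim_orthogonal_comp:
  fixes L :: "'a::euclidean_space set"
  assumes "subspace L"
  shows "dim L + dim (orthogonal_comp L) = DIM('a)"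
proof -
  have "{x + y |x y. x \<in> L \<and> y \<in> orthogonal_comp L} = UNIV"
    using subspace_sum_orthogonal_comp[OF assms] by (force simp: set_plus_def)
  moreover have "dim (L \<inter> orthogonal_comp L) = 0"
    by (simp add: orthogonal_Int_0[OF assms])
  ultimately show ?thesis
    using dim_sums_Int[OF assms subspace_orthogonal_comp[of L]] by (metis add_0_right dim_UNIV)
qed

lemma subspace_sum_eq_UNIV:
  fixes S T :: "'a::euclidean_space set"
  assumes "subspace S" "subspace T" "S \<inter> T = {0}" "dim S + dim T = DIM('a)"
  shows "S + T = UNIV"
proof -
  have sum: "S + T = {x + y |x y. x \<in> S \<and> y \<in> T}"
    by (force simp: set_plus_def)
  have "span (S + T) = S + T"
    unfolding sum span_eq_iff by (rule subspace_sums[OF assms(1,2)])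
  moreover have "dim (S + T) = DIM('a)"
    using dim_sums_Int[OF assms(1,2)] assms(3,4) unfolding sum by simp
  ultimately show ?thesis
    by (metis dim_eq_full)
qed

lemma sum_inverse_image_orthogonal_comp_eq_UNIV:
  fixes A :: "real^'n^'n" and L :: "(real^'n) set"
  assumes "transpose A = A" "invertible A" "subspace L"
    and posA: "pos_def_on A L"
    and posB: "pos_def_on (matrix_inv A) (orthogonal_comp L)"
  shows "L + (*v) (matrix_inv A) ` orthogonal_comp L = UNIV"
proof -
  define B where "B = matrix_inv A"
  define T where "T = (*v) B ` orthogonal_comp L"
  have linB: "linear ((*v) B)"
    by (rule matrix_vector_mul_linear)
  have "inj ((*v) B)"
    by (metis B_def assms(2) injI matrix_inv_right matrix_vector_mul_assoc matrix_vector_mul_lid)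
  then have "dim T = dim (orthogonal_comp L)"
    unfolding T_def by (intro dim_image_eq[OF linB]) (simp add: inj_on_def)
  moreover have subT: "subspace T"
    unfolding T_def by (rule linear_subspace_image[OF linB subspace_orthogonal_comp])
  moreover have "L \<inter> T = {0}"
  proof (rule subset_antisym)
    show "L \<inter> T \<subseteq> {0}"
    proof
      fix x assume "x \<in> L \<inter> T"
      then obtain m where x: "x \<in> L" and m: "m \<in> orthogonal_comp L" "x = B *v m"
        unfolding T_def by auto
      have "- m \<in> orthogonal_comp L"
        using m(1) by (simp add: subspace_neg subspace_orthogonal_comp)
      moreover have "orthogonal x (- m)"
        using x m(1) unfolding orthogonal_comp_def by (simp add: orthogonal_def)
      ultimately have "x \<bullet> (A *v x) + (- m) \<bullet> (B *v (- m)) = 0"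
        using quadratic_form_add_right_inverse[OF assms(1) matrix_inv_right[OF assms(2)], of x "- m"]
        by (simp add: B_def m(2) linear_neg[OF matrix_vector_mul_linear])
      then show "x \<in> {0}"
        using pos_def_on_add_pos[OF posA posB x \<open>- m \<in> _\<close>] by (force simp: B_def)
    qed
  qed (use subspace_0[OF assms(3)] subspace_0[OF subT] in auto)
  ultimately have "L + T = UNIV"
    using subspace_sum_eq_UNIV[OF assms(3) subT] dim_add_dim_orthogonal_comp[OF assms(3)] by simp
  then show ?thesis
    by (simp add: T_def B_def)
qed

theorem theorem3p4:
  fixes A :: "real^'n^'n" and L :: "(real^'n) set"
  assumes "transpose A = A"
    and "invertible A"
    and "subspace L"
    and "pos_def_on A L"
    and "pos_def_on (matrix_inv A) (orthogonal_comp L)"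
  shows "pos_def A"
  unfolding pos_def_def pos_def_on_def
proof (intro ballI impI)
  fix z :: "real^'n" assume "z \<noteq> 0"
  have "z \<in> L + (*v) (matrix_inv A) ` orthogonal_comp L"
    by (simp add: sum_inverse_image_orthogonal_comp_eq_UNIV[OF assms])
  then obtain l m where l: "l \<in> L" and m: "m \<in> orthogonal_comp L" and z: "z = l + matrix_inv A *v m"
    by (auto elim!: set_plus_elim)
  have "orthogonal l m"
    using l m unfolding orthogonal_comp_def by simp
  then have "z \<bullet> (A *v z) = l \<bullet> (A *v l) + m \<bullet> (matrix_inv A *v m)"
    unfolding z by (rule quadratic_form_add_right_inverse[OF assms(1) matrix_inv_right[OF assms(2)]])
  also have "\<dots> > 0"
    using \<open>z \<noteq> 0\<close> z by (intro pos_def_on_add_pos[OF assms(4,5) l m]) auto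
  finally show "z \<bullet> (A *v z) > 0" .
qed

end
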